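(* Let $f:\mathbb{F}_2^{\,n}\to\mathbb{R}$, let $s\ge 1$ and $d$ be integers, and let $H\le\mathbb{F}_2^{\,n}$ be a subspace of codimension $d$ drawn uniformly at random. Consider the $2^d$ cosets (buckets) of $H$, with bucket energies indexed so that $y_1\ge y_2\ge\dots\ge y_{2^d}$, and for each bucket $i$ let $y_i^*$ be the energy of the largest Fourier coefficient in that bucket, and $z_i=y_i-y_i^*$. Then $$\mathbb{E}_H\left[\sum_{i=1}^s z_i\right]\le\sqrt{\frac{2s}{2^d}}\,\|f\|_2^2.$$
   Context: $\hat f(\alpha)=\frac{1}{2^n}\sum_x f(x)(-1)^{\alpha\cdot x}$ and $\|f\|_2^2=\frac{1}{2^n}\sum_x f(x)^2=\sum_\alpha\hat f(\alpha)^2$. The energy of a Fourier coefficient is $\hat f(\alpha)^2$. For a coset $C=a+H$ of $H$, its energy is $y=\sum_{\beta\in C}\hat f(\beta)^2$ and $y^*=\max_{\beta\in C}\hat f(\beta)^2$. *)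

theory Defs
  imports Complex_Main "HOL-Library.Cardinality"
begin

text \<open>Vectors of F_2^n are modelled as functions 'n => bool (n = CARD('n)),
  with addition = coordinatewise xor.\<close>

definition vadd :: "('n \<Rightarrow> bool) \<Rightarrow> ('n \<Rightarrow> bool) \<Rightarrow> ('n \<Rightarrow> bool)" where
  "vadd x y = (\<lambda>i. x i \<noteq> y i)"

definition vzero :: "'n \<Rightarrow> bool" where
  "vzero = (\<lambda>i. False)"

text \<open>Inner product over F_2 as a count; only its parity matters since we
  use (-1)^(alpha . x).\<close>
definition dotp :: "('n::finite \<Rightarrow> bool) \<Rightarrow> ('n \<Rightarrow> bool) \<Rightarrow> nat" where
  "dotp a x = card {i. a i \<and> x i}"

definition fourier :: "(('n::finite \<Rightarrow> bool) \<Rightarrow> real) \<Rightarrow> ('n \<Rightarrow> bool) \<Rightarrow> real" where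
  "fourier f a = (1 / 2 ^ CARD('n)) * (\<Sum>x\<in>UNIV. f x * (-1) ^ dotp a x)"

definition norm2sq :: "(('n::finite \<Rightarrow> bool) \<Rightarrow> real) \<Rightarrow> real" where
  "norm2sq f = (1 / 2 ^ CARD('n)) * (\<Sum>x\<in>UNIV. (f x)\<^sup>2)"

text \<open>F_2-linear subspace (closure under scalars 0,1 is automatic).\<close>
definition is_subspace :: "('n \<Rightarrow> bool) set \<Rightarrow> bool" where
  "is_subspace H \<longleftrightarrow> vzero \<in> H \<and> (\<forall>x\<in>H. \<forall>y\<in>H. vadd x y \<in> H)"

definition subspaces_codim :: "nat \<Rightarrow> ('n::finite \<Rightarrow> bool) set set" where
  "subspaces_codim d = {H. is_subspace H \<and> card H = 2 ^ (CARD('n) - d)}"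

definition coset :: "('n \<Rightarrow> bool) \<Rightarrow> ('n \<Rightarrow> bool) set \<Rightarrow> ('n \<Rightarrow> bool) set" where
  "coset a H = vadd a ` H"

definition cosets :: "('n \<Rightarrow> bool) set \<Rightarrow> ('n \<Rightarrow> bool) set set" where
  "cosets H = (\<lambda>a. coset a H) ` UNIV"

definition energy :: "(('n::finite \<Rightarrow> bool) \<Rightarrow> real) \<Rightarrow> ('n \<Rightarrow> bool) set \<Rightarrow> real" where
  "energy f C = (\<Sum>b\<in>C. (fourier f b)\<^sup>2)"

definition max_energy :: "(('n::finite \<Rightarrow> bool) \<Rightarrow> real) \<Rightarrow> ('n \<Rightarrow> bool) set \<Rightarrow> real" where
  "max_energy f C = Max ((\<lambda>b. (fourier f b)\<^sup>2) ` C)"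

definition zval :: "(('n::finite \<Rightarrow> bool) \<Rightarrow> real) \<Rightarrow> ('n \<Rightarrow> bool) set \<Rightarrow> real" where
  "zval f C = energy f C - max_energy f C"

end

theory Submission
  imports Defs "HOL-Analysis.Convex"
begin

text \<open>
  Write e(b) for the energy of the coefficient b. In a bucket C with energy y and top energy
  y*, we have (y - y*)^2 <= y (y - y*) <= y^2 - sum_b e(b)^2 = sum_b e(b) (y - e(b)); summing
  over all buckets and applying Cauchy-Schwarz, the s residuals z_i add up to at most
  sqrt (s X_H), where the collision energy X_H = sum_a e(a) sum_{h in H, h /= 0} e(a + h)
  collects the products of the energies of distinct coefficients sharing a bucket. Linear
  automorphisms act transitively on nonzero vectors, so a fixed nonzero h lies in the random
  H with probability at most 2^-d; with Parseval this gives E X_H <= ||f||^4 / 2^d, and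
  Jensen for the square root finishes the proof.
\<close>

lemma vadd_comm: "vadd x y = vadd y x"
  unfolding vadd_def by auto

lemma vadd_assoc: "vadd (vadd x y) z = vadd x (vadd y z)"
  unfolding vadd_def by auto

lemma vadd_self [simp]: "vadd x x = vzero"
  unfolding vadd_def vzero_def by simp

lemma vadd_vzero [simp]: "vadd x vzero = x" "vadd vzero x = x"
  unfolding vadd_def vzero_def by simp_all

lemma vadd_cancel [simp]: "vadd x (vadd x y) = y" "vadd (vadd y x) x = y"
  unfolding vadd_def by auto

lemma vadd_eq_vzero_iff: "vadd x y = vzero \<longleftrightarrow> x = y"
  unfolding vadd_def vzero_def by (auto simp: fun_eq_iff)

lemma inj_on_vadd: "inj_on (vadd a) A"
  by (metis inj_onI vadd_cancel(1))

lemma bij_vadd: "bij (vadd a)"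
  by (metis bij_betw_def inj_on_vadd surjI vadd_cancel(1))

lemma sum_vadd_shift: "(\<Sum>x\<in>UNIV. g (vadd a x)) = (\<Sum>x\<in>UNIV. g x)"
  by (rule sum.reindex_bij_betw[OF bij_vadd])

definition character :: "('n::finite \<Rightarrow> bool) \<Rightarrow> ('n \<Rightarrow> bool) \<Rightarrow> real" where
  "character a x = (-1) ^ dotp a x"

lemma character_commute: "character a x = character x a"
  unfolding character_def dotp_def by (metis (mono_tags, lifting) Collect_cong)

lemma dotp_vadd: "dotp a x + dotp a y = dotp a (vadd x y) + 2 * card {i. a i \<and> x i \<and> y i}"
proof -
  let ?A = "{i. a i \<and> x i \<and> \<not> y i}" and ?B = "{i. a i \<and> \<not> x i \<and> y i}"
    and ?C = "{i. a i \<and> x i \<and> y i}"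
  have "dotp a x = card ?A + card ?C" "dotp a y = card ?B + card ?C"
    "dotp a (vadd x y) = card ?A + card ?B"
    unfolding dotp_def vadd_def
    by (subst card_Un_disjoint[symmetric]; auto intro: arg_cong[where f = card])+
  then show ?thesis by simp
qed

lemma character_vadd: "character a x * character a y = character a (vadd x y)"
  unfolding character_def by (simp add: power_add[symmetric] dotp_vadd power_mult power_add)

lemma sum_character:
  "(\<Sum>a\<in>UNIV. character a z) = (if z = vzero then 2 ^ CARD('n) else 0)"
  for z :: "'n::finite \<Rightarrow> bool"
proof (cases "z = vzero")
  case True
  then show ?thesis by (simp add: character_def dotp_def vzero_def card_fun)
next
  case False
  then obtain i where "z i" unfolding vzero_def by auto
  define e :: "'n \<Rightarrow> bool" where "e = (\<lambda>k. k = i)"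
  have "character e z = -1"
    using \<open>z i\<close> by (simp add: character_def dotp_def e_def Collect_conv_if)
  then have "character (vadd e a) z = - character a z" for a
    by (simp add: character_commute[of _ z] flip: character_vadd)
  then have "(\<Sum>a\<in>UNIV. character a z) = - (\<Sum>a\<in>UNIV. character a z)"
    using sum_vadd_shift[of "\<lambda>a. character a z" e] by (simp add: sum_negf)
  with False show ?thesis by simp
qed

lemma parseval: "(\<Sum>a\<in>UNIV. (fourier f a)\<^sup>2) = norm2sq f"
  for f :: "('n::finite \<Rightarrow> bool) \<Rightarrow> real"
proof -
  define c :: real where "c = 1 / 2 ^ CARD('n)"
  have "(fourier f a)\<^sup>2 = c\<^sup>2 * (\<Sum>x\<in>UNIV. \<Sum>y\<in>UNIV. f x * f y * character a (vadd x y))"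
    for a
  proof -
    have "fourier f a = c * (\<Sum>x\<in>UNIV. f x * character a x)"
      by (simp add: fourier_def character_def c_def)
    then show ?thesis
      by (simp add: power2_eq_square sum_product mult_ac flip: character_vadd)
  qed
  then have "(\<Sum>a\<in>UNIV. (fourier f a)\<^sup>2)
      = c\<^sup>2 * (\<Sum>a\<in>UNIV. \<Sum>x\<in>UNIV. \<Sum>y\<in>UNIV. f x * f y * character a (vadd x y))"
    by (simp add: sum_distrib_left)
  also have "\<dots> = c\<^sup>2 * (\<Sum>x\<in>UNIV. \<Sum>y\<in>UNIV. f x * f y * (\<Sum>a\<in>UNIV. character a (vadd x y)))"
  proof -
    have "(\<Sum>a\<in>UNIV. \<Sum>x\<in>UNIV. \<Sum>y\<in>UNIV. F a x y) = (\<Sum>x\<in>UNIV. \<Sum>y\<in>UNIV. \<Sum>a\<in>UNIV. F a x y)"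
      for F :: "('n \<Rightarrow> bool) \<Rightarrow> ('n \<Rightarrow> bool) \<Rightarrow> ('n \<Rightarrow> bool) \<Rightarrow> real"
      by (subst sum.swap) (rule sum.cong[OF refl], rule sum.swap)
    then show ?thesis by (simp add: sum_distrib_left)
  qed
  also have "\<dots> = c\<^sup>2 * (\<Sum>x\<in>UNIV. (f x)\<^sup>2 * 2 ^ CARD('n))"
    by (simp add: sum_character vadd_eq_vzero_iff power2_eq_square if_distrib cong: if_cong)
  also have "\<dots> = norm2sq f"
    by (simp add: norm2sq_def c_def power2_eq_square flip: sum_distrib_right)
  finally show ?thesis .
qed

lemma norm2sq_nonneg: "0 \<le> norm2sq f"
  unfolding norm2sq_def by (simp add: sum_nonneg)

lemma subspace_vzero: "is_subspace H \<Longrightarrow> vzero \<in> H"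
  unfolding is_subspace_def by simp

lemma subspace_vadd: "is_subspace H \<Longrightarrow> x \<in> H \<Longrightarrow> y \<in> H \<Longrightarrow> vadd x y \<in> H"
  unfolding is_subspace_def by simp

lemma mem_coset_iff: "is_subspace H \<Longrightarrow> x \<in> coset b H \<longleftrightarrow> vadd b x \<in> H"
  unfolding coset_def by (auto intro: image_eqI[where x = "vadd b x"])

lemma mem_coset_self: "is_subspace H \<Longrightarrow> a \<in> coset a H"
  by (simp add: mem_coset_iff subspace_vzero)

lemma coset_eq_iff:
  assumes "is_subspace H"
  shows "coset a H = coset b H \<longleftrightarrow> b \<in> coset a H"
proof
  assume "b \<in> coset a H"
  then have "vadd a b \<in> H" using mem_coset_iff[OF assms] by blast
  have "vadd a x = vadd (vadd a b) (vadd b x)" "vadd b x = vadd (vadd a b) (vadd a x)" for x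
    by (metis vadd_assoc vadd_cancel(1) vadd_comm)+
  then have "x \<in> coset a H \<longleftrightarrow> x \<in> coset b H" for x
    using \<open>vadd a b \<in> H\<close> subspace_vadd[OF assms] unfolding mem_coset_iff[OF assms] by metis
  then show "coset a H = coset b H" by blast
qed (use assms in \<open>auto simp: mem_coset_iff subspace_vzero\<close>)

lemma sum_coset: "sum g (coset a H) = (\<Sum>h\<in>H. g (vadd a h))"
  unfolding coset_def by (simp add: sum.reindex inj_on_vadd)

lemma sum_cosets:
  fixes H :: "('n::finite \<Rightarrow> bool) set"
  assumes "is_subspace H"
  shows "(\<Sum>C\<in>cosets H. \<Sum>b\<in>C. g C b) = (\<Sum>a\<in>UNIV. g (coset a H) a)"
proof -
  have "(\<Sum>b\<in>C. g C b) = (\<Sum>a\<in>{a. coset a H = C}. g (coset a H) a)" if "C \<in> cosets H" for C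
  proof -
    have "{a. coset a H = C} = C"
      using that coset_eq_iff[OF assms] unfolding cosets_def by auto
    moreover have "(\<Sum>a\<in>{a. coset a H = C}. g (coset a H) a) = (\<Sum>a\<in>{a. coset a H = C}. g C a)"
      by (rule sum.cong) auto
    ultimately show ?thesis by simp
  qed
  then have "(\<Sum>C\<in>cosets H. \<Sum>b\<in>C. g C b) = (\<Sum>C\<in>cosets H. \<Sum>a\<in>{a. coset a H = C}. g (coset a H) a)"
    by (rule sum.cong[OF refl])
  also have "\<dots> = (\<Sum>a\<in>UNIV. g (coset a H) a)"
    unfolding cosets_def
    using sum.image_gen[of UNIV "\<lambda>a. g (coset a H) a" "\<lambda>a. coset a H"] by simp
  finally show ?thesis .
qed

lemma ex_linear_functional_true_at:
  assumes "u \<noteq> vzero" "w \<noteq> vzero"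
  shows "\<exists>\<phi>. (\<forall>x y. \<phi> (vadd x y) = (\<phi> x \<noteq> \<phi> y)) \<and> \<phi> u \<and> \<phi> w"
proof (cases "\<exists>i. u i \<and> w i")
  case True
  then obtain i where "u i" "w i" by blast
  then show ?thesis by (intro exI[where x = "\<lambda>x. x i"]) (auto simp: vadd_def)
next
  case False
  obtain i where "u i" using assms(1) unfolding vzero_def by auto
  obtain j where "w j" using assms(2) unfolding vzero_def by auto
  with False \<open>u i\<close> show ?thesis by (intro exI[where x = "\<lambda>x. x i \<noteq> x j"]) (auto simp: vadd_def)
qed

lemma ex_linear_involution_mapping:
  assumes "u \<noteq> vzero" "w \<noteq> vzero"
  shows "\<exists>T. (\<forall>x y. T (vadd x y) = vadd (T x) (T y)) \<and> (\<forall>x. T (T x) = x) \<and> T u = w"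
proof -
  obtain \<phi> where lin: "\<And>x y. \<phi> (vadd x y) = (\<phi> x \<noteq> \<phi> y)" and "\<phi> u" "\<phi> w"
    using ex_linear_functional_true_at[OF assms] by blast
  then have "\<not> \<phi> (vadd u w)" by simp
  define T where "T x = (if \<phi> x then vadd x (vadd u w) else x)" for x
  \<comment> \<open>a transvection: it fixes the hyperplane ker \<phi> and swaps u and w\<close>
  have "T (vadd x y) = vadd (T x) (T y)" for x y
    unfolding T_def using lin[of x y] by (auto simp: vadd_def fun_eq_iff)
  moreover have "T (T x) = x" for x
    unfolding T_def using lin \<open>\<not> \<phi> (vadd u w)\<close> by auto
  moreover have "T u = w"
    unfolding T_def using \<open>\<phi> u\<close> by (simp flip: vadd_assoc)
  ultimately show ?thesis by blast
qed

lemma image_subspaces_codim: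
  fixes T :: "('n::finite \<Rightarrow> bool) \<Rightarrow> ('n \<Rightarrow> bool)"
  assumes lin: "\<And>x y. T (vadd x y) = vadd (T x) (T y)" and "inj T"
    and "H \<in> subspaces_codim d"
  shows "T ` H \<in> subspaces_codim d"
proof -
  have "T vzero = vzero" using lin[of vzero vzero] by simp
  moreover have "is_subspace H" "card H = 2 ^ (CARD('n) - d)"
    using assms(3) unfolding subspaces_codim_def by auto
  ultimately have "is_subspace (T ` H)"
    unfolding is_subspace_def by (auto simp flip: lin) (metis image_eqI)
  moreover have "card (T ` H) = card H" using \<open>inj T\<close> by (simp add: card_image inj_on_subset)
  ultimately show ?thesis using \<open>card H = _\<close> unfolding subspaces_codim_def by simp
qed

lemma card_subspaces_containing_eq:
  fixes u w :: "'n::finite \<Rightarrow> bool"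
  assumes "u \<noteq> vzero" "w \<noteq> vzero"
  shows "card {H \<in> subspaces_codim d. u \<in> H} = card {H \<in> subspaces_codim d. w \<in> H}"
proof -
  obtain T where lin: "\<And>x y. T (vadd x y) = vadd (T x) (T y)" and inv: "\<And>x. T (T x) = x"
    and "T u = w"
    using ex_linear_involution_mapping[OF assms] by blast
  have "inj T" by (metis inv injI)
  have inv_image: "T ` T ` H = H" for H by (simp add: image_image inv)
  have image_eq: "(`) T ` {H \<in> subspaces_codim d. u \<in> H} = {H \<in> subspaces_codim d. w \<in> H}"
  proof (intro equalityI subsetI)
    fix H assume H: "H \<in> {H \<in> subspaces_codim d. w \<in> H}"
    have "u \<in> T ` H" using H \<open>T u = w\<close> inv by (metis image_eqI mem_Collect_eq)
    with H have "T ` H \<in> {H \<in> subspaces_codim d. u \<in> H}"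
      using image_subspaces_codim[OF lin \<open>inj T\<close>] by blast
    then show "H \<in> (`) T ` {H \<in> subspaces_codim d. u \<in> H}"
      by (rule image_eqI[rotated]) (simp add: inv_image)
  qed (use image_subspaces_codim[OF lin \<open>inj T\<close>] \<open>T u = w\<close> in auto)
  have "inj_on ((`) T) {H \<in> subspaces_codim d. u \<in> H}"
    by (rule inj_on_inverseI[where g = "(`) T"]) (rule inv_image)
  from card_image[OF this] show ?thesis unfolding image_eq by simp
qed

lemma sum_sum_Int_eq_sum_card:
  fixes g :: "'a \<Rightarrow> 'b::comm_semiring_1"
  assumes "finite \<H>" "finite A"
  shows "(\<Sum>H\<in>\<H>. \<Sum>h\<in>H \<inter> A. g h) = (\<Sum>h\<in>A. of_nat (card {H \<in> \<H>. h \<in> H}) * g h)"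
proof -
  have "(\<Sum>H\<in>\<H>. \<Sum>h\<in>H \<inter> A. g h) = (\<Sum>H\<in>\<H>. \<Sum>h\<in>A. if h \<in> H then g h else 0)"
    using assms(2) by (intro sum.cong[OF refl]) (simp only: Int_commute[of _ A] sum.inter_restrict)
  also have "\<dots> = (\<Sum>h\<in>A. \<Sum>H\<in>\<H>. if h \<in> H then g h else 0)"
    by (rule sum.swap)
  also have "\<dots> = (\<Sum>h\<in>A. of_nat (card {H \<in> \<H>. h \<in> H}) * g h)"
    using assms(1) by (intro sum.cong[OF refl]) (simp add: sum.inter_filter[symmetric])
  finally show ?thesis .
qed

lemma card_subspaces_containing_le:
  fixes u :: "'n::finite \<Rightarrow> bool"
  assumes "d \<le> CARD('n)" "u \<noteq> vzero"
  shows "real (card {H \<in> subspaces_codim d. u \<in> H}) * 2 ^ d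
    \<le> real (card (subspaces_codim d :: ('n \<Rightarrow> bool) set set))"
proof -
  define S where "S = (subspaces_codim d :: ('n \<Rightarrow> bool) set set)"
  define c where "c = real (card {H \<in> S. u \<in> H})"
  define U where "U = (UNIV - {vzero} :: ('n \<Rightarrow> bool) set)"
  have "card (H \<inter> U) = 2 ^ (CARD('n) - d) - 1" if "H \<in> S" for H
  proof -
    have "H \<inter> U = H - {vzero}" unfolding U_def by blast
    then show ?thesis
      using that unfolding S_def subspaces_codim_def
      by (simp add: subspace_vzero card_Diff_singleton)
  qed
  then have "(\<Sum>H\<in>S. real (card (H \<inter> U))) = real (card S) * (2 ^ (CARD('n) - d) - 1)"
    by (simp add: of_nat_diff)
  moreover have "(\<Sum>H\<in>S. real (card (H \<inter> U))) = (\<Sum>h\<in>U. c)"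
    using sum_sum_Int_eq_sum_card[of S U "\<lambda>_. 1 :: real"] card_subspaces_containing_eq[OF assms(2)]
    unfolding S_def c_def U_def by simp
  moreover have "card U = 2 ^ CARD('n) - 1"
    unfolding U_def by (simp add: card_Diff_singleton card_fun)
  ultimately have "(2 ^ CARD('n) - 1) * c = real (card S) * (2 ^ (CARD('n) - d) - 1)"
    by (simp add: of_nat_diff)
  then have "(2 ^ CARD('n) - 1) * (c * 2 ^ d) = real (card S) * (2 ^ (CARD('n) - d) - 1) * 2 ^ d"
    by simp
  also have "\<dots> = real (card S) * (2 ^ CARD('n) - 2 ^ d)"
    using assms(1) by (simp add: algebra_simps flip: power_add)
  also have "\<dots> \<le> real (card S) * (2 ^ CARD('n) - 1)"
    by (simp add: mult_left_mono)
  finally show ?thesis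
    unfolding S_def c_def using one_less_power[of 2 "CARD('n)"] by (simp add: mult.commute)
qed

lemma sum_subspaces_sum_nonzero_le:
  fixes g :: "('n::finite \<Rightarrow> bool) \<Rightarrow> real"
  assumes "d \<le> CARD('n)" "\<And>h. 0 \<le> g h"
  shows "(\<Sum>H\<in>subspaces_codim d. \<Sum>h\<in>H - {vzero}. g h)
    \<le> real (card (subspaces_codim d :: ('n \<Rightarrow> bool) set set)) / 2 ^ d * (\<Sum>h\<in>UNIV. g h)"
proof -
  define N where "N = real (card (subspaces_codim d :: ('n \<Rightarrow> bool) set set))"
  have "(\<Sum>H\<in>subspaces_codim d. \<Sum>h\<in>H - {vzero}. g h)
      = (\<Sum>h\<in>UNIV - {vzero}. real (card {H \<in> subspaces_codim d. h \<in> H}) * g h)"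
    using sum_sum_Int_eq_sum_card[of "subspaces_codim d" "UNIV - {vzero}" g] by (simp add: Diff_eq)
  also have "\<dots> \<le> (\<Sum>h\<in>UNIV - {vzero}. N / 2 ^ d * g h)"
    using card_subspaces_containing_le[OF assms(1)] assms(2)
    by (intro sum_mono mult_right_mono) (auto simp: N_def field_simps)
  also have "\<dots> \<le> (\<Sum>h\<in>UNIV. N / 2 ^ d * g h)"
    using assms(2) by (intro sum_mono2) (auto simp: N_def)
  finally show ?thesis by (simp add: N_def sum_distrib_left)
qed

lemma sum_le_sqrt_card_mult_sum_squares:
  fixes x :: "'a \<Rightarrow> real"
  shows "(\<Sum>i\<in>I. x i) \<le> sqrt (card I * (\<Sum>i\<in>I. (x i)\<^sup>2))"
  using sum_squared_le_sum_of_squares[of x I] by (intro real_le_rsqrt) (simp add: mult.commute)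

lemma sum_minus_Max_squared_le:
  fixes g :: "'a \<Rightarrow> real"
  assumes "finite C" "C \<noteq> {}" "\<And>b. b \<in> C \<Longrightarrow> 0 \<le> g b"
  shows "(sum g C - Max (g ` C))\<^sup>2 \<le> (\<Sum>b\<in>C. g b * (sum g C - g b))"
proof -
  define y where "y = sum g C"
  define m where "m = Max (g ` C)"
  have "m \<in> g ` C" unfolding m_def using assms by simp
  then have "0 \<le> m" "m \<le> y"
    unfolding y_def using assms by (auto intro: member_le_sum)
  have "(\<Sum>b\<in>C. g b * g b) \<le> (\<Sum>b\<in>C. m * g b)"
    unfolding m_def using assms by (intro sum_mono mult_right_mono) auto
  then have "(\<Sum>b\<in>C. g b * g b) \<le> m * y"
    by (simp add: y_def sum_distrib_left)
  moreover have "(\<Sum>b\<in>C. g b * (y - g b)) = y * y - (\<Sum>b\<in>C. g b * g b)"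
    by (simp add: y_def right_diff_distrib sum_subtractf sum_distrib_right[symmetric])
  moreover have "m * m \<le> m * y" using \<open>m \<le> y\<close> \<open>0 \<le> m\<close> by (rule mult_left_mono)
  ultimately show ?thesis
    unfolding y_def[symmetric] m_def[symmetric] by (simp add: power2_eq_square algebra_simps)
qed

lemma zval_squared_le:
  assumes "finite C" "C \<noteq> {}"
  shows "(zval f C)\<^sup>2 \<le> (\<Sum>b\<in>C. (fourier f b)\<^sup>2 * (energy f C - (fourier f b)\<^sup>2))"
  unfolding zval_def energy_def max_energy_def using assms by (rule sum_minus_Max_squared_le) simp

definition collision_energy :: "(('n::finite \<Rightarrow> bool) \<Rightarrow> real) \<Rightarrow> ('n \<Rightarrow> bool) set \<Rightarrow> real" where
  "collision_energy f H =
    (\<Sum>a\<in>UNIV. (fourier f a)\<^sup>2 * (\<Sum>h\<in>H - {vzero}. (fourier f (vadd a h))\<^sup>2))"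

lemma collision_energy_nonneg: "0 \<le> collision_energy f H"
  unfolding collision_energy_def by (simp add: sum_nonneg)

lemma sum_cosets_eq_collision_energy:
  assumes "is_subspace H"
  shows "(\<Sum>C\<in>cosets H. \<Sum>b\<in>C. (fourier f b)\<^sup>2 * (energy f C - (fourier f b)\<^sup>2))
    = collision_energy f H"
proof -
  have "energy f (coset a H) - (fourier f a)\<^sup>2 = (\<Sum>h\<in>H - {vzero}. (fourier f (vadd a h))\<^sup>2)" for a
    unfolding energy_def sum_coset
    using sum.remove[OF finite subspace_vzero[OF assms], of "\<lambda>h. (fourier f (vadd a h))\<^sup>2"] by simp
  then show ?thesis
    unfolding sum_cosets[OF assms] collision_energy_def by simp
qed

lemma sum_zval_le_sqrt_collision_energy:
  assumes "is_subspace H" "\<C> \<subseteq> cosets H"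
  shows "(\<Sum>C\<in>\<C>. zval f C) \<le> sqrt (card \<C> * collision_energy f H)"
proof -
  define g where "g C = (\<Sum>b\<in>C. (fourier f b)\<^sup>2 * (energy f C - (fourier f b)\<^sup>2))" for C
  have "(zval f C)\<^sup>2 \<le> g C" if "C \<in> cosets H" for C
    using that mem_coset_self[OF assms(1)] unfolding g_def cosets_def
    by (intro zval_squared_le) auto
  then have "(\<Sum>C\<in>\<C>. (zval f C)\<^sup>2) \<le> (\<Sum>C\<in>cosets H. g C)"
    using assms(2)
    by (intro order_trans[OF sum_mono sum_mono2]) (auto intro: order_trans[OF zero_le_power2])
  also have "\<dots> = collision_energy f H"
    unfolding g_def by (rule sum_cosets_eq_collision_energy[OF assms(1)])
  finally have "card \<C> * (\<Sum>C\<in>\<C>. (zval f C)\<^sup>2) \<le> card \<C> * collision_energy f H"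
    by (simp add: mult_left_mono)
  then show ?thesis
    using sum_le_sqrt_card_mult_sum_squares[of "zval f" \<C>] by (meson order_trans real_sqrt_le_mono)
qed

lemma sum_collision_energy_le:
  fixes f :: "('n::finite \<Rightarrow> bool) \<Rightarrow> real"
  assumes "d \<le> CARD('n)"
  shows "(\<Sum>H\<in>subspaces_codim d. collision_energy f H)
    \<le> real (card (subspaces_codim d :: ('n \<Rightarrow> bool) set set)) / 2 ^ d * (norm2sq f)\<^sup>2"
proof -
  define c where "c = real (card (subspaces_codim d :: ('n \<Rightarrow> bool) set set)) / 2 ^ d"
  have bound: "(\<Sum>H\<in>subspaces_codim d. \<Sum>h\<in>H - {vzero}. (fourier f (vadd a h))\<^sup>2)
      \<le> c * norm2sq f" for a
    using sum_subspaces_sum_nonzero_le[OF assms, of "\<lambda>h. (fourier f (vadd a h))\<^sup>2"]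
    by (simp add: c_def sum_vadd_shift[of "\<lambda>h. (fourier f h)\<^sup>2"] parseval)
  have "(\<Sum>H\<in>subspaces_codim d. collision_energy f H)
      = (\<Sum>a\<in>UNIV. (fourier f a)\<^sup>2 *
           (\<Sum>H\<in>subspaces_codim d. \<Sum>h\<in>H - {vzero}. (fourier f (vadd a h))\<^sup>2))"
    unfolding collision_energy_def by (subst sum.swap) (simp add: sum_distrib_left)
  also have "\<dots> \<le> (\<Sum>a\<in>UNIV. (fourier f a)\<^sup>2 * (c * norm2sq f))"
    by (intro sum_mono mult_left_mono bound) simp
  also have "\<dots> = c * (norm2sq f)\<^sup>2"
    by (simp only: parseval flip: sum_distrib_right) (simp add: power2_eq_square)
  finally show ?thesis unfolding c_def .
qed

lemma sum_zval_first_buckets_le: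
  fixes s d :: nat and \<sigma> :: "nat \<Rightarrow> ('n::finite \<Rightarrow> bool) set"
  assumes "is_subspace H" "bij_betw \<sigma> {1..2^d} (cosets H)"
  shows "(\<Sum>i\<in>{1..min s (2^d)}. zval f (\<sigma> i)) \<le> sqrt (s * collision_energy f H)"
proof -
  define I where "I = {1..min s (2^d)}"
  have "I \<subseteq> {1..2^d}" unfolding I_def by simp
  then have "inj_on \<sigma> I" "\<sigma> ` I \<subseteq> cosets H"
    using assms(2) by (auto simp: bij_betw_def inj_on_subset)
  then have "(\<Sum>i\<in>I. zval f (\<sigma> i)) \<le> sqrt (card I * collision_energy f H)"
    using sum_zval_le_sqrt_collision_energy[OF assms(1), of "\<sigma> ` I" f]
    by (simp add: sum.reindex card_image)
  also have "\<dots> \<le> sqrt (s * collision_energy f H)"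
    using card_atLeastAtMost[of 1 "min s (2^d)"] unfolding I_def
    by (intro real_sqrt_le_mono mult_right_mono) (simp_all add: collision_energy_nonneg)
  finally show ?thesis unfolding I_def .
qed

theorem lemma3p1:
  fixes f :: "('n::finite \<Rightarrow> bool) \<Rightarrow> real"
    and s d :: nat
    and \<sigma> :: "('n \<Rightarrow> bool) set \<Rightarrow> nat \<Rightarrow> ('n \<Rightarrow> bool) set"
  assumes "s \<ge> 1"
    and "d \<le> CARD('n)"
    and "\<forall>H\<in>subspaces_codim d. bij_betw (\<sigma> H) {1..2^d} (cosets H)"
    and "\<forall>H\<in>subspaces_codim d. \<forall>i j. 1 \<le> i \<longrightarrow> i \<le> j \<longrightarrow> j \<le> 2^d \<longrightarrow>
           energy f (\<sigma> H j) \<le> energy f (\<sigma> H i)"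
  shows "(\<Sum>H\<in>subspaces_codim d. \<Sum>i\<in>{1..min s (2^d)}. zval f (\<sigma> H i))
           / real (card (subspaces_codim d :: ('n \<Rightarrow> bool) set set))
         \<le> sqrt (2 * real s / 2 ^ d) * norm2sq f"
proof -
  let ?S = "subspaces_codim d :: ('n \<Rightarrow> bool) set set"
  define N where "N = real (card ?S)"
  have "(\<Sum>H\<in>?S. \<Sum>i\<in>{1..min s (2^d)}. zval f (\<sigma> H i)) \<le> (\<Sum>H\<in>?S. sqrt (s * collision_energy f H))"
    using assms(3) by (intro sum_mono sum_zval_first_buckets_le) (auto simp: subspaces_codim_def)
  also have "\<dots> \<le> sqrt (N * (s * (\<Sum>H\<in>?S. collision_energy f H)))"
    using sum_le_sqrt_card_mult_sum_squares[of "\<lambda>H. sqrt (s * collision_energy f H)" ?S]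
    by (simp add: N_def collision_energy_nonneg sum_distrib_left)
  also have "\<dots> \<le> sqrt (N * (s * (N / 2 ^ d * (norm2sq f)\<^sup>2)))"
    using sum_collision_energy_le[OF assms(2), of f]
    by (intro real_sqrt_le_mono mult_left_mono) (simp_all add: N_def)
  also have "\<dots> = sqrt ((N * norm2sq f)\<^sup>2 * (s / 2 ^ d))"
    by (simp add: power2_eq_square mult_ac)
  also have "\<dots> = N * (sqrt (s / 2 ^ d) * norm2sq f)"
    by (simp only: real_sqrt_mult real_sqrt_abs) (simp add: N_def norm2sq_nonneg abs_mult)
  also have "\<dots> \<le> N * (sqrt (2 * s / 2 ^ d) * norm2sq f)"
    by (intro mult_left_mono mult_right_mono) (simp_all add: N_def norm2sq_nonneg divide_right_mono)
  finally show ?thesis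
    by (cases "N = 0") (simp_all add: N_def norm2sq_nonneg divide_le_eq mult.commute)
qed

end
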